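(* Let $k\in\mathbb{N}$, let $q>1$, and let $\tilde\chi_q$ be a modified character modulo $q$. Let $I_k=\{n+1,\dots,n+k\}$ (with $n\ge0$) be a block of $k$ consecutive positive integers and let $r=\#\{m\in I_k:\tilde\chi_q(m)=-1\}$. Let $P_r=\{p_1,\dots,p_r\}$ be any set of $r$ distinct primes with $p_i>k$ and $p_i\nmid q$ for all $i$, and define $f(m)=\tilde\chi_q(m)\lambda_{P_r}(m)$. Then there exists $n'\in\mathbb{N}\cup\{0\}$ such that $f(n'+1)=f(n'+2)=\cdots=f(n'+k)=+1$.
   Context: For a real Dirichlet character $\chi_q$ modulo $q>1$, a modified character $\tilde\chi_q$ is the completely multiplicative function $\mathbb{N}\to\{+1,-1\}$ with $\tilde\chi_q(p)=\chi_q(p)$ for primes $p\nmid q$ and $\tilde\chi_q(p)=\eta(p)\in\{+1,-1\}$ (an arbitrary sign) for primes $p\mid q$. For a set $S$ of primes, $\lambda_S$ is the completely multiplicative function with $\lambda_S(p)=-1$ if $p\in S$ and $\lambda_S(p)=+1$ for primes $p\notin S$. *)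

theory Defs
  imports "HOL-Computational_Algebra.Computational_Algebra"
begin

definition real_dirichlet_char :: "nat \<Rightarrow> (nat \<Rightarrow> real) \<Rightarrow> bool" where
  "real_dirichlet_char q \<chi> \<longleftrightarrow>
     \<chi> 1 = 1 \<and>
     (\<forall>m n. \<chi> (m * n) = \<chi> m * \<chi> n) \<and>
     (\<forall>n. \<chi> (n + q) = \<chi> n) \<and>
     (\<forall>n. \<chi> n = 0 \<longleftrightarrow> \<not> coprime n q)"

definition modified_char :: "nat \<Rightarrow> (nat \<Rightarrow> real) \<Rightarrow> (nat \<Rightarrow> real) \<Rightarrow> bool" where
  "modified_char q \<chi> \<chi>t \<longleftrightarrow>
     \<chi>t 1 = 1 \<and>
     (\<forall>m n. m > 0 \<longrightarrow> n > 0 \<longrightarrow> \<chi>t (m * n) = \<chi>t m * \<chi>t n) \<and>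
     (\<forall>p. prime p \<longrightarrow> \<not> p dvd q \<longrightarrow> \<chi>t p = \<chi> p) \<and>
     (\<forall>p. prime p \<longrightarrow> p dvd q \<longrightarrow> \<chi>t p \<in> {1, -1})"

definition lambda_S :: "nat set \<Rightarrow> nat \<Rightarrow> real" where
  "lambda_S S n = (-1) ^ size (filter_mset (\<lambda>p. p \<in> S) (prime_factorization n))"

end

theory Submission
  imports Defs "HOL-Number_Theory.Number_Theory"
begin

text \<open>Let \<open>B\<close> be the set of \<open>m\<close> in the block with \<open>\<chi>t m = -1\<close> and pair the primes of \<open>P\<close>
  bijectively with \<open>B\<close> via \<open>\<tau>\<close>. By the Chinese remainder theorem there is a shift \<open>x\<close> that is
  a multiple of a high power \<open>Q\<close> of \<open>q\<close> and satisfies \<open>x + \<tau> p \<equiv> p (mod p\<^sup>2)\<close> for every \<open>p \<in> P\<close>.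
  Shifting by a multiple of \<open>Q\<close> does not change \<open>\<chi>t\<close> on the block, since the part of \<open>m\<close> built
  from primes dividing \<open>q\<close> divides \<open>Q\<close> and the remaining part keeps its residue class modulo \<open>q\<close>.
  Since every \<open>p \<in> P\<close> exceeds the length of the block, \<open>p\<close> divides exactly one shifted element,
  namely \<open>\<tau> p + x\<close>, and only to the first power. Hence \<open>\<lambda>\<^sub>P\<close> is \<open>-1\<close> on the shifted block
  exactly at the shifts of \<open>B\<close>, which cancels the sign of \<open>\<chi>t\<close>.\<close>

lemma real_dirichlet_char_add_mult:
  assumes "real_dirichlet_char q \<chi>"
  shows "\<chi> (a + t * q) = \<chi> a"
proof (induction t)
  case (Suc t)
  have "\<chi> (a + Suc t * q) = \<chi> ((a + t * q) + q)"
    by (simp add: algebra_simps)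
  also have "\<dots> = \<chi> (a + t * q)"
    using assms by (simp add: real_dirichlet_char_def)
  finally show ?case
    using Suc by simp
qed simp

lemma real_dirichlet_char_mod:
  assumes "real_dirichlet_char q \<chi>"
  shows "\<chi> a = \<chi> (a mod q)"
  using real_dirichlet_char_add_mult[OF assms, of "a mod q" "a div q"] by simp

lemma real_dirichlet_char_mult:
  assumes "real_dirichlet_char q \<chi>"
  shows "\<chi> (m * n) = \<chi> m * \<chi> n"
  using assms by (simp add: real_dirichlet_char_def)

lemma real_dirichlet_char_power:
  assumes "real_dirichlet_char q \<chi>"
  shows "\<chi> (a ^ e) = \<chi> a ^ e"
  using assms by (induction e) (simp_all add: real_dirichlet_char_def)

lemma real_dirichlet_char_sign:
  assumes "real_dirichlet_char q \<chi>" "q > 0" "coprime a q"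
  shows "\<chi> a = 1 \<or> \<chi> a = -1"
proof -
  have "[a ^ totient q = 1] (mod q)"
    using euler_theorem[OF assms(3)] .
  then have "\<chi> (a ^ totient q) = \<chi> 1"
    using real_dirichlet_char_mod[OF assms(1)] unfolding cong_def by metis
  then have "\<chi> a ^ totient q = 1"
    using assms(1) real_dirichlet_char_power[OF assms(1)] by (simp add: real_dirichlet_char_def)
  moreover have "totient q > 0"
    using assms(2) by simp
  ultimately show ?thesis
    by (smt (verit) real_root_one root_abs_power)
qed

lemma modified_char_mult:
  assumes "modified_char q \<chi> \<chi>t" "m > 0" "n > 0"
  shows "\<chi>t (m * n) = \<chi>t m * \<chi>t n"
  using assms by (simp add: modified_char_def)

lemma modified_char_eq_on_coprime:
  assumes dc: "real_dirichlet_char q \<chi>" and mc: "modified_char q \<chi> \<chi>t"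
  shows "m > 0 \<Longrightarrow> coprime m q \<Longrightarrow> \<chi>t m = \<chi> m"
proof (induction m rule: prime_divisors_induct)
  case (unit x)
  then show ?case
    using dc mc by (simp add: real_dirichlet_char_def modified_char_def)
next
  case (factor p x)
  then have "x > 0" "coprime p q" "coprime x q"
    by auto
  then have "\<not> p dvd q"
    using factor.hyps by (metis coprime_absorb_left not_prime_unit)
  then have "\<chi>t p = \<chi> p"
    using mc factor.hyps by (simp add: modified_char_def)
  moreover have "\<chi>t x = \<chi> x"
    using factor.IH \<open>x > 0\<close> \<open>coprime x q\<close> .
  ultimately show ?case
    using modified_char_mult[OF mc] real_dirichlet_char_mult[OF dc] \<open>x > 0\<close> factor.hyps
      prime_gt_0_nat by metis
qed simp

lemma modified_char_sign:
  assumes dc: "real_dirichlet_char q \<chi>" and mc: "modified_char q \<chi> \<chi>t" and "q > 0"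
  shows "m > 0 \<Longrightarrow> \<chi>t m = 1 \<or> \<chi>t m = -1"
proof (induction m rule: prime_divisors_induct)
  case (unit x)
  then show ?case
    using mc by (simp add: modified_char_def)
next
  case (factor p x)
  have "\<chi>t p = 1 \<or> \<chi>t p = -1"
  proof (cases "p dvd q")
    case True
    then show ?thesis
      using mc factor.hyps by (simp add: modified_char_def)
  next
    case False
    then have "coprime p q"
      using factor.hyps by (simp add: prime_imp_coprime)
    then show ?thesis
      using modified_char_eq_on_coprime[OF dc mc] real_dirichlet_char_sign[OF dc \<open>q > 0\<close>]
        factor.hyps prime_gt_0_nat by metis
  qed
  moreover have "x > 0"
    using factor.prems by simp
  ultimately show ?case
    using factor mc by (auto simp: modified_char_mult prime_gt_0_nat)
qed simp

lemma not_coprime_imp_common_prime_factor: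
  "\<not> coprime (m :: nat) q \<Longrightarrow> \<exists>p. prime p \<and> p dvd m \<and> p dvd q"
  by (smt (verit, best) coprimeI gcd_nat.order_iff_strict gcd_nat.trans prime_prime_factor)

text \<open>The divisibility hypothesis means \<open>v\<^sub>p(m) + v\<^sub>p(q) \<le> v\<^sub>p(Q)\<close> for every prime \<open>p\<close>
  dividing \<open>q\<close>.\<close>
lemma modified_char_add_mult:
  assumes dc: "real_dirichlet_char q \<chi>" and mc: "modified_char q \<chi> \<chi>t"
  shows "m > 0 \<Longrightarrow> coprime c q \<Longrightarrow> m * q dvd Q * c \<Longrightarrow> \<chi>t (m + t * Q) = \<chi>t m"
proof (induction m arbitrary: Q rule: less_induct)
  case (less m)
  show ?case
  proof (cases "coprime m q")
    case True
    have "q dvd Q * c"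
      using less.prems(3) by (rule dvd_mult_right)
    then have "q dvd Q"
      using less.prems(2) by (simp add: coprime_commute coprime_dvd_mult_left_iff)
    then obtain s where s: "Q = q * s" ..
    then have shift: "m + t * Q = m + (t * s) * q"
      by (simp add: mult_ac)
    have "coprime (m + (t * s) * q) q"
      using True by (metis add.commute coprime_commute coprime_iff_gcd_eq_1 gcd_add_mult)
    then have "\<chi>t (m + t * Q) = \<chi> (m + (t * s) * q)"
      unfolding shift using modified_char_eq_on_coprime[OF dc mc] less.prems(1) by simp
    also have "\<dots> = \<chi> m"
      by (rule real_dirichlet_char_add_mult[OF dc])
    also have "\<dots> = \<chi>t m"
      using modified_char_eq_on_coprime[OF dc mc] True less.prems(1) by simp
    finally show ?thesis .
  next
    case False
    then obtain p where p: "prime p" "p dvd m" "p dvd q"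
      using not_coprime_imp_common_prime_factor by blast
    from p(2) obtain m' where m': "m = p * m'" ..
    have "m' > 0" "m' < m"
      using less.prems(1) prime_gt_1_nat[OF p(1)] by (auto simp: m')
    from p(3) obtain q' where "q = p * q'" ..
    then have "coprime p c"
      using less.prems(2) by (simp add: coprime_commute)
    moreover have "p dvd Q * c"
      using dvd_trans[OF p(2) dvd_mult_left[OF less.prems(3)]] .
    ultimately have "p dvd Q"
      by (simp add: coprime_dvd_mult_left_iff)
    then obtain Q' where Q': "Q = p * Q'" ..
    have "m' * q dvd Q' * c"
      using less.prems(3) p(1) by (simp add: m' Q' mult.assoc)
    then have m'_shift: "\<chi>t (m' + t * Q') = \<chi>t m'"
      using less.IH \<open>m' < m\<close> \<open>m' > 0\<close> less.prems(2) by blast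
    have "\<chi>t (m + t * Q) = \<chi>t (p * (m' + t * Q'))"
      by (simp add: m' Q' algebra_simps)
    also have "\<dots> = \<chi>t p * \<chi>t m'"
      using modified_char_mult[OF mc] m'_shift \<open>m' > 0\<close> p(1) prime_gt_0_nat by simp
    also have "\<dots> = \<chi>t m"
      using modified_char_mult[OF mc] \<open>m' > 0\<close> p(1) prime_gt_0_nat m' by simp
    finally show ?thesis .
  qed
qed

lemma exists_dvd_power_mult_coprime:
  fixes m q :: nat
  shows "m > 0 \<Longrightarrow> \<exists>E c. coprime c q \<and> m dvd q ^ E * c"
proof (induction m rule: less_induct)
  case (less m)
  show ?case
  proof (cases "coprime m q")
    case True
    then show ?thesis
      by (intro exI[of _ 0] exI[of _ m]) simp
  next
    case False
    then obtain p where p: "prime p" "p dvd m" "p dvd q"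
      using not_coprime_imp_common_prime_factor by blast
    from p(2) obtain m' where m': "m = p * m'" ..
    have "m' > 0" "m' < m"
      using less.prems prime_gt_1_nat[OF p(1)] by (auto simp: m')
    then obtain E c where "coprime c q" "m' dvd q ^ E * c"
      using less.IH by blast
    moreover have "m dvd q * (q ^ E * c)"
      using calculation(2) p(3) by (simp add: m' mult_dvd_mono)
    ultimately show ?thesis
      by (intro exI[of _ "Suc E"] exI[of _ c]) (simp add: algebra_simps)
  qed
qed

lemma modified_char_periodic_on_finite:
  assumes dc: "real_dirichlet_char q \<chi>" and mc: "modified_char q \<chi> \<chi>t"
    and "finite A" "0 \<notin> A"
  shows "\<exists>E. \<forall>m\<in>A. \<forall>t. \<chi>t (m + t * q ^ E) = \<chi>t m"
proof -
  have "\<Prod>A > 0"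
    using assms(4) by (intro prod_pos) (metis gr0I)
  then obtain E c where c: "coprime c q" "\<Prod>A dvd q ^ E * c"
    using exists_dvd_power_mult_coprime by blast
  have "\<chi>t (m + t * q ^ Suc E) = \<chi>t m" if "m \<in> A" for m t
  proof (rule modified_char_add_mult[OF dc mc _ c(1)])
    show "m > 0"
      using that assms(4) by (metis gr0I)
    have "m dvd q ^ E * c"
      using that assms(3) c(2) by (meson dvd_prodI dvd_trans)
    then show "m * q dvd q ^ Suc E * c"
      by (simp add: mult_dvd_mono algebra_simps)
  qed
  then show ?thesis
    by blast
qed

lemma lambda_S_eq_1:
  assumes "\<forall>p\<in>S. \<not> p dvd m"
  shows "lambda_S S m = 1"
proof -
  have S: "filter_mset (\<lambda>p. p \<in> S) (prime_factorization m) = {#}"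
  proof (rule multiset_eqI)
    fix x
    show "count (filter_mset (\<lambda>p. p \<in> S) (prime_factorization m)) x = count {#} x"
      using assms not_dvd_imp_multiplicity_0[of x m] by (auto simp: count_prime_factorization)
  qed
  show ?thesis
    unfolding lambda_S_def S by simp
qed

lemma lambda_S_eq_minus_1:
  assumes "p0 \<in> S" "prime p0" "multiplicity p0 m = 1" "\<forall>p\<in>S. p \<noteq> p0 \<longrightarrow> \<not> p dvd m"
  shows "lambda_S S m = -1"
proof -
  have S: "filter_mset (\<lambda>p. p \<in> S) (prime_factorization m) = {#p0#}"
  proof (rule multiset_eqI)
    fix x
    show "count (filter_mset (\<lambda>p. p \<in> S) (prime_factorization m)) x = count {#p0#} x"
      using assms not_dvd_imp_multiplicity_0[of x m] by (auto simp: count_prime_factorization)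
  qed
  show ?thesis
    unfolding lambda_S_def S by simp
qed

lemma multiplicity_eq_1_if_cong:
  fixes p x :: nat
  assumes "prime p" "[x = p] (mod p ^ 2)"
  shows "multiplicity p x = 1"
proof (rule multiplicity_eqI)
  have "1 < p"
    using assms(1) prime_gt_1_nat by blast
  then have "p < p ^ 2"
    by (simp add: power2_eq_square)
  have "[x = p] (mod p)"
    using cong_dvd_modulus_nat[OF assms(2), of p] by (simp add: power2_eq_square)
  then show "p ^ 1 dvd x"
    by (simp add: cong_dvd_iff)
  show "\<not> p ^ Suc 1 dvd x"
    using cong_dvd_iff[OF assms(2)] \<open>p < p ^ 2\<close> \<open>1 < p\<close> nat_dvd_not_less
    by (simp add: numeral_2_eq_2)
qed

lemma cong_less_dist_imp_eq_nat:
  fixes a b p :: nat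
  assumes "[a = b] (mod p)" "a < b + p" "b < a + p"
  shows "a = b"
proof -
  have "p dvd a - b" "p dvd b - a"
    using assms(1) cong_sym[OF assms(1)] cong_altdef_nat
    by (cases "b \<le> a"; force)+
  moreover have "a - b < p" "b - a < p"
    using assms(2,3) by linarith+
  ultimately have "a - b = 0" "b - a = 0"
    by (metis gr0I nat_dvd_not_less)+
  then show ?thesis
    by simp
qed

lemma cong_add_complement_nat:
  fixes x a b m :: nat
  assumes "m > 0" "[x = b + (m - 1) * a] (mod m)"
  shows "[x + a = b] (mod m)"
proof -
  have "[x + a = b + (m - 1) * a + a] (mod m)"
    using assms(2) by (rule cong_add) simp
  also have "b + (m - 1) * a + a = b + m * a"
    using assms(1) by (cases m) (simp_all add: algebra_simps)
  also have "[\<dots> = b] (mod m)"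
    by (simp add: cong_def)
  finally show ?thesis .
qed

lemma chinese_remainder_nat_multiple:
  fixes A :: "'a set" and m u :: "'a \<Rightarrow> nat"
  assumes "finite A" "\<forall>i\<in>A. \<forall>j\<in>A. i \<noteq> j \<longrightarrow> coprime (m i) (m j)"
    and "\<forall>i\<in>A. coprime Q (m i)"
  shows "\<exists>t. \<forall>i\<in>A. [t * Q = u i] (mod m i)"
proof -
  define I where "I = insert None (Some ` A)"
  define m' where "m' = case_option Q m"
  define u' where "u' = case_option 0 u"
  have "\<forall>i\<in>I. \<forall>j\<in>I. i \<noteq> j \<longrightarrow> coprime (m' i) (m' j)"
    using assms(2,3) by (auto simp: I_def m'_def coprime_commute)
  moreover have "finite I"
    using assms(1) by (simp add: I_def)
  ultimately obtain x where x: "\<forall>i\<in>I. [x = u' i] (mod m' i)"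
    using chinese_remainder_nat by blast
  then have "Q dvd x"
    by (auto simp: I_def m'_def u'_def cong_0_iff)
  then obtain t where "x = t * Q"
    by (metis dvdE mult.commute)
  then show ?thesis
    using x by (auto simp: I_def m'_def u'_def)
qed

lemma exists_mult_power_cong_prime_squares:
  fixes P :: "nat set" and \<tau> :: "nat \<Rightarrow> nat"
  assumes "finite P" "\<forall>p\<in>P. prime p \<and> \<not> p dvd q"
  shows "\<exists>t. \<forall>p\<in>P. [t * q ^ E + \<tau> p = p] (mod p ^ 2)"
proof -
  have power_coprime: "\<forall>p\<in>P. coprime (q ^ E) (p ^ 2)"
    using assms(2) by (metis coprime_commute coprime_power_left_iff coprime_power_right_iff
      prime_imp_coprime)
  have P_coprime: "\<forall>p\<in>P. \<forall>p'\<in>P. p \<noteq> p' \<longrightarrow> coprime (p ^ 2) (p' ^ 2)"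
    using assms(2) by (simp add: primes_coprime)
  obtain t where "\<forall>p\<in>P. [t * q ^ E = p + (p ^ 2 - 1) * \<tau> p] (mod p ^ 2)"
    using chinese_remainder_nat_multiple[OF assms(1) P_coprime power_coprime,
      where u = "\<lambda>p. p + (p ^ 2 - 1) * \<tau> p"] by blast
  then show ?thesis
    using assms(2) by (meson cong_add_complement_nat prime_gt_0_nat zero_less_power)
qed

lemma lambda_S_shifted_block:
  fixes P B :: "nat set" and \<tau> :: "nat \<Rightarrow> nat"
  assumes P: "\<forall>p\<in>P. prime p \<and> k < p"
    and \<tau>: "bij_betw \<tau> P B" and B: "B \<subseteq> {n+1..n+k}"
    and x: "\<forall>p\<in>P. [x + \<tau> p = p] (mod p ^ 2)"
    and m: "m \<in> {n+1..n+k}"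
  shows "lambda_S P (m + x) = (if m \<in> B then -1 else 1)"
proof -
  have dvd_iff: "p dvd m + x \<longleftrightarrow> m = \<tau> p" if p: "p \<in> P" for p
  proof -
    have "[x + \<tau> p = 0] (mod p)"
      using cong_dvd_modulus_nat[OF bspec[OF x p], of p] cong_trans cong_0_iff
      by (metis dvd_refl dvd_power numeral_2_eq_2 zero_less_Suc)
    then have "p dvd m + x \<longleftrightarrow> [m = \<tau> p] (mod p)"
      by (metis add.commute cong_0_iff cong_add_rcancel_nat cong_sym cong_trans)
    also have "\<dots> \<longleftrightarrow> m = \<tau> p"
    proof -
      have "\<tau> p \<in> {n+1..n+k}" "k < p"
        using P p B bij_betw_apply[OF \<tau> p] by auto
      then have "m < \<tau> p + p" "\<tau> p < m + p"
        using m by auto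
      then show ?thesis
        by (auto intro: cong_less_dist_imp_eq_nat)
    qed
    finally show ?thesis .
  qed
  show ?thesis
  proof (cases "m \<in> B")
    case True
    then obtain p0 where p0: "p0 \<in> P" "\<tau> p0 = m"
      using \<tau> by (auto simp: bij_betw_def)
    have "lambda_S P (m + x) = -1"
    proof (rule lambda_S_eq_minus_1[OF p0(1)])
      show "prime p0"
        using P p0(1) by blast
      moreover have "[m + x = p0] (mod p0 ^ 2)"
        using x p0 by (metis add.commute)
      ultimately show "multiplicity p0 (m + x) = 1"
        by (rule multiplicity_eq_1_if_cong)
      show "\<forall>p\<in>P. p \<noteq> p0 \<longrightarrow> \<not> p dvd m + x"
        using dvd_iff p0 bij_betw_imp_inj_on[OF \<tau>] by (metis inj_onD)
    qed
    then show ?thesis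
      using True by simp
  next
    case False
    then show ?thesis
      using dvd_iff \<tau> by (auto simp: bij_betw_def intro!: lambda_S_eq_1)
  qed
qed

theorem lemma2p1:
  fixes k q n :: nat and \<chi> \<chi>t :: "nat \<Rightarrow> real" and P :: "nat set"
  assumes "q > 1"
    and "real_dirichlet_char q \<chi>"
    and "modified_char q \<chi> \<chi>t"
    and "finite P" and "card P = card {m \<in> {n+1..n+k}. \<chi>t m = -1}"
    and "\<forall>p\<in>P. prime p \<and> p > k \<and> \<not> p dvd q"
  shows "\<exists>n'::nat. \<forall>m\<in>{n'+1..n'+k}. \<chi>t m * lambda_S P m = 1"
proof -
  define B where "B = {m \<in> {n+1..n+k}. \<chi>t m = -1}"
  have "finite B"
    by (simp add: B_def)
  then obtain \<tau> where \<tau>: "bij_betw \<tau> P B"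
    using finite_same_card_bij[OF assms(4)] assms(5) unfolding B_def by blast
  obtain E where E: "\<forall>m\<in>{n+1..n+k}. \<forall>t. \<chi>t (m + t * q ^ E) = \<chi>t m"
    using modified_char_periodic_on_finite[OF assms(2,3)] by fastforce
  obtain t where x: "\<forall>p\<in>P. [t * q ^ E + \<tau> p = p] (mod p ^ 2)"
    using exists_mult_power_cong_prime_squares[OF assms(4)] assms(6) by blast
  have P: "\<forall>p\<in>P. prime p \<and> k < p"
    using assms(6) by blast
  have shifted: "\<chi>t (m + t * q ^ E) * lambda_S P (m + t * q ^ E) = 1"
    if m: "m \<in> {n+1..n+k}" for m
  proof -
    have "B \<subseteq> {n+1..n+k}"
      by (auto simp: B_def)
    then have "lambda_S P (m + t * q ^ E) = (if m \<in> B then -1 else 1)"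
      by (rule lambda_S_shifted_block[OF P \<tau> _ x m])
    moreover have "\<chi>t m = 1 \<or> \<chi>t m = -1"
      using modified_char_sign[OF assms(2,3)] assms(1) m by simp
    ultimately show ?thesis
      using E m by (auto simp: B_def)
  qed
  show ?thesis
  proof (intro exI[of _ "n + t * q ^ E"] ballI)
    fix m assume "m \<in> {n + t * q ^ E + 1..n + t * q ^ E + k}"
    then have "m - t * q ^ E \<in> {n+1..n+k}" "m = (m - t * q ^ E) + t * q ^ E"
      by auto
    then show "\<chi>t m * lambda_S P m = 1"
      using shifted by metis
  qed
qed

end
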